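(* Let $Y=y[0,\dots,A-1]$ and $Z=z[0,\dots,B-1]$ ($A,B\ge1$) be finite sequences with values in a totally ordered set, each regarded on a linear domain, and let $X=x[0,\dots,A+B-1]$ be obtained by gluing them ($x[i]=y[i]$ for $i<A$, $x[A+j]=z[j]$, with $A-1$ and $A$ adjacent). Suppose the boundary extrema at the glue point — the flat of $Y$ containing $y[A-1]$ and the flat of $Z$ containing $z[0]$ — are of different types (one is a local minimum and the other a local maximum). Then either the total number of extrema of $X$ equals the sum of the numbers of extrema of $Y$ and of $Z$, or both the number of local minima and the number of local maxima of $X$ are each one less than the corresponding sums for $Y$ and $Z$.
   Context: For a sequence on a linear domain (index $i$ adjacent to $i+1$), a flat is a maximal run of consecutive indices with equal value $l$; its outer neighbours are the (at most two) indices adjacent to the run but not in it. A flat is a local minimum if all its existing outer neighbours have value $>l$, and a local maximum if all its existing outer neighbours have value $<l$. Flats at the ends of the domain are classified by their single outer neighbour, and a flat with no outer neighbour (a constant sequence) counts both as a local minimum and a local maximum. The number of extrema is the number of flats that are local minima plus the number that are local maxima. *)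

theory Defs
  imports Main
begin

text \<open>A sequence on a linear domain is a list; indices i and i+1 are adjacent.
  A flat is a maximal run of indices i..j (inclusive) carrying one value.\<close>

definition is_flat :: "'a list \<Rightarrow> nat \<Rightarrow> nat \<Rightarrow> bool" where
  "is_flat xs i j \<longleftrightarrow> i \<le> j \<and> j < length xs \<and>
     (\<forall>k. i \<le> k \<and> k \<le> j \<longrightarrow> xs ! k = xs ! i) \<and>
     (0 < i \<longrightarrow> xs ! (i - 1) \<noteq> xs ! i) \<and>
     (Suc j < length xs \<longrightarrow> xs ! Suc j \<noteq> xs ! i)"

definition flat_is_min :: "'a::linorder list \<Rightarrow> nat \<Rightarrow> nat \<Rightarrow> bool" where
  "flat_is_min xs i j \<longleftrightarrow>
     (0 < i \<longrightarrow> xs ! (i - 1) > xs ! i) \<and>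
     (Suc j < length xs \<longrightarrow> xs ! Suc j > xs ! i)"

definition flat_is_max :: "'a::linorder list \<Rightarrow> nat \<Rightarrow> nat \<Rightarrow> bool" where
  "flat_is_max xs i j \<longleftrightarrow>
     (0 < i \<longrightarrow> xs ! (i - 1) < xs ! i) \<and>
     (Suc j < length xs \<longrightarrow> xs ! Suc j < xs ! i)"

definition num_min :: "'a::linorder list \<Rightarrow> nat" where
  "num_min xs = card {(i, j). is_flat xs i j \<and> flat_is_min xs i j}"

definition num_max :: "'a::linorder list \<Rightarrow> nat" where
  "num_max xs = card {(i, j). is_flat xs i j \<and> flat_is_max xs i j}"

definition num_extrema :: "'a::linorder list \<Rightarrow> nat" where
  "num_extrema xs = num_min xs + num_max xs"

definition flat_at :: "'a list \<Rightarrow> nat \<Rightarrow> (nat \<Rightarrow> nat \<Rightarrow> bool) \<Rightarrow> bool" where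
  "flat_at xs p P \<longleftrightarrow> (\<exists>i j. is_flat xs i j \<and> i \<le> p \<and> p \<le> j \<and> P i j)"

end

(*
  Minima and maxima are treated uniformly as flats all of whose outer neighbours are R-related
  to their value, for R = (>) and R = (<).  Away from the glue point the flats of ys @ zs and
  their types are those of ys and of zs (shifted).  Only the last flat of ys (value last ys) and
  the first flat of zs (value hd zs) change.  If last ys = hd zs they merge into one flat with
  the outer neighbours of both; since one of the two was a strict minimum and the other a strict
  maximum, the merged flat is neither, and one minimum and one maximum are lost.  Otherwise they
  stay separate and each gains an outer neighbour across the glue point; depending on whether
  last ys < hd zs, both keep their type or both lose it.
*)
theory Submission
  imports Defs
begin

definition flat_rel :: "('a \<Rightarrow> 'a \<Rightarrow> bool) \<Rightarrow> 'a list \<Rightarrow> nat \<Rightarrow> nat \<Rightarrow> bool" where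
  "flat_rel R xs i j \<longleftrightarrow>
     (0 < i \<longrightarrow> R (xs ! (i - 1)) (xs ! i)) \<and> (Suc j < length xs \<longrightarrow> R (xs ! Suc j) (xs ! i))"

definition extremal_flats :: "('a \<Rightarrow> 'a \<Rightarrow> bool) \<Rightarrow> 'a list \<Rightarrow> (nat \<times> nat) set" where
  "extremal_flats R xs = {(i, j). is_flat xs i j \<and> flat_rel R xs i j}"

lemma flat_is_min_eq_flat_rel: "flat_is_min xs i j \<longleftrightarrow> flat_rel (>) xs i j"
  by (simp add: flat_is_min_def flat_rel_def)

lemma flat_is_max_eq_flat_rel: "flat_is_max xs i j \<longleftrightarrow> flat_rel (<) xs i j"
  by (simp add: flat_is_max_def flat_rel_def)

lemma num_min_eq_card_extremal_flats: "num_min xs = card (extremal_flats (>) xs)"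
  by (simp add: num_min_def extremal_flats_def flat_is_min_eq_flat_rel)

lemma num_max_eq_card_extremal_flats: "num_max xs = card (extremal_flats (<) xs)"
  by (simp add: num_max_def extremal_flats_def flat_is_max_eq_flat_rel)

lemma is_flat_bounds: "is_flat xs i j \<Longrightarrow> i \<le> j \<and> j < length xs"
  by (simp add: is_flat_def)

lemma is_flat_nth: "is_flat xs i j \<Longrightarrow> i \<le> k \<Longrightarrow> k \<le> j \<Longrightarrow> xs ! k = xs ! i"
  unfolding is_flat_def by blast

lemma is_flat_left_neighbour: "is_flat xs i j \<Longrightarrow> 0 < i \<Longrightarrow> xs ! (i - 1) \<noteq> xs ! i"
  unfolding is_flat_def by blast

lemma is_flat_right_neighbour: "is_flat xs i j \<Longrightarrow> Suc j < length xs \<Longrightarrow> xs ! Suc j \<noteq> xs ! i"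
  unfolding is_flat_def by blast

lemma is_flat_overlap_le:
  assumes f: "is_flat xs i j" and f': "is_flat xs i' j'"
    and k: "i \<le> k" "k \<le> j" "i' \<le> k" "k \<le> j'"
  shows "i' \<le> i \<and> j \<le> j'"
proof (intro conjI leI notI)
  assume "i < i'"
  then have "xs ! (i' - 1) = xs ! i'"
    using is_flat_nth[OF f, of "i' - 1"] is_flat_nth[OF f, of i'] k by simp
  with \<open>i < i'\<close> f' show False
    unfolding is_flat_def by blast
next
  assume "j' < j"
  then have "xs ! Suc j' = xs ! i'"
    using is_flat_nth[OF f, of "Suc j'"] is_flat_nth[OF f, of k] is_flat_nth[OF f', of k] k by simp
  moreover have "Suc j' < length xs"
    using \<open>j' < j\<close> is_flat_bounds[OF f] by simp
  ultimately show False
    using f' unfolding is_flat_def by blast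
qed

lemma is_flat_unique:
  assumes "is_flat xs i j" "is_flat xs i' j'" "i \<le> k" "k \<le> j" "i' \<le> k" "k \<le> j'"
  shows "i' = i \<and> j' = j"
  using is_flat_overlap_le[OF assms] is_flat_overlap_le[OF assms(2,1) assms(5,6,3,4)] by simp

lemma flat_at_last_index:
  assumes "flat_at xs (length xs - 1) P"
  obtains p where "is_flat xs p (length xs - 1)"
proof -
  obtain i j where "is_flat xs i j" "length xs - 1 \<le> j"
    using assms unfolding flat_at_def by blast
  moreover from this have "j = length xs - 1"
    using is_flat_bounds by fastforce
  ultimately show thesis
    using that by blast
qed

lemma flat_at_first_index:
  assumes "flat_at xs 0 P"
  obtains q where "is_flat xs 0 q"
  using assms unfolding flat_at_def by blast

lemma flat_at_iff:
  assumes "is_flat xs i j" "i \<le> k" "k \<le> j"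
  shows "flat_at xs k P \<longleftrightarrow> P i j"
  using assms is_flat_unique[OF assms(1)] unfolding flat_at_def by blast

lemma finite_extremal_flats: "finite (extremal_flats R xs)"
proof (rule finite_subset)
  show "extremal_flats R xs \<subseteq> {..<length xs} \<times> {..<length xs}"
    using is_flat_bounds[of xs] unfolding extremal_flats_def by fastforce
qed simp

lemma card_extremal_flats_split:
  assumes "p \<le> r"
  shows "card (extremal_flats R xs) =
      card {(i, j) \<in> extremal_flats R xs. j < p}
    + card {(i, j) \<in> extremal_flats R xs. r < i}
    + card {(i, j) \<in> extremal_flats R xs. p \<le> j \<and> i \<le> r}"
proof -
  let ?E = "extremal_flats R xs"
  let ?A = "{(i, j) \<in> ?E. j < p}" and ?B = "{(i, j) \<in> ?E. r < i}"
    and ?C = "{(i, j) \<in> ?E. p \<le> j \<and> i \<le> r}"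
  have fin: "finite ?A" "finite ?B" "finite ?C"
    using finite_extremal_flats by (auto intro: finite_subset[of _ ?E])
  have "?A \<inter> ?B = {}"
    using assms is_flat_bounds[of xs] unfolding extremal_flats_def by fastforce
  then have "card (?A \<union> ?B) = card ?A + card ?B"
    using fin by (simp add: card_Un_disjoint)
  moreover have "card (?A \<union> ?B \<union> ?C) = card (?A \<union> ?B) + card ?C"
    by (rule card_Un_disjoint) (use fin in auto)
  moreover have "?A \<union> ?B \<union> ?C = ?E" by auto
  ultimately show ?thesis by (simp only:)
qed

lemma extremal_flats_meeting_flat:
  assumes "is_flat xs p r"
  shows "{(i, j) \<in> extremal_flats R xs. p \<le> j \<and> i \<le> r} = (if flat_rel R xs p r then {(p, r)} else {})"
proof -
  have "i = p \<and> j = r" if "is_flat xs i j" "p \<le> j" "i \<le> r" for i j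
    using is_flat_unique[OF assms that(1), of "max i p"] that is_flat_bounds[OF assms]
      is_flat_bounds[OF that(1)] by simp
  then show ?thesis
    using assms is_flat_bounds[OF assms] unfolding extremal_flats_def by auto
qed

lemma card_extremal_flats_meeting_two_flats:
  assumes "is_flat xs p m" "is_flat xs (Suc m) r"
  shows "card {(i, j) \<in> extremal_flats R xs. p \<le> j \<and> i \<le> r} =
    of_bool (flat_rel R xs p m) + of_bool (flat_rel R xs (Suc m) r)"
proof -
  have "{(i, j) \<in> extremal_flats R xs. p \<le> j \<and> i \<le> r} =
      {(i, j) \<in> extremal_flats R xs. p \<le> j \<and> i \<le> m}
    \<union> {(i, j) \<in> extremal_flats R xs. Suc m \<le> j \<and> i \<le> r}"
    using is_flat_bounds[OF assms(1)] is_flat_bounds[OF assms(2)] is_flat_bounds[of xs]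
    unfolding extremal_flats_def by fastforce
  then show ?thesis
    unfolding extremal_flats_meeting_flat[OF assms(1)] extremal_flats_meeting_flat[OF assms(2)]
    using is_flat_bounds[OF assms(2)] by simp
qed

lemma extremal_flats_append_left:
  assumes "Suc j < length ys"
  shows "(i, j) \<in> extremal_flats R (ys @ zs) \<longleftrightarrow> (i, j) \<in> extremal_flats R ys"
  using assms unfolding extremal_flats_def is_flat_def flat_rel_def
  by (cases "i < length ys") (simp_all add: nth_append less_imp_diff_less)

lemma extremal_flats_append_right:
  assumes "0 < i"
  shows "(length ys + i, length ys + j) \<in> extremal_flats R (ys @ zs) \<longleftrightarrow> (i, j) \<in> extremal_flats R zs"
proof -
  let ?n = "length ys"
  have shift: "(\<forall>k. ?n + i \<le> k \<and> k \<le> ?n + j \<longrightarrow> P k) \<longleftrightarrow> (\<forall>k. i \<le> k \<and> k \<le> j \<longrightarrow> P (?n + k))"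
    for P :: "nat \<Rightarrow> bool"
  proof (intro iffI allI impI)
    fix k assume P: "\<forall>k. i \<le> k \<and> k \<le> j \<longrightarrow> P (?n + k)" and k: "?n + i \<le> k \<and> k \<le> ?n + j"
    have "i \<le> k - ?n \<and> k - ?n \<le> j" and "k = ?n + (k - ?n)"
      using k by arith+
    then show "P k"
      using P by metis
  qed simp
  have "(ys @ zs) ! (?n + i - 1) = zs ! (i - 1)" and "(ys @ zs) ! Suc (?n + j) = zs ! Suc j"
    using assms nth_append_length_plus[of ys zs "i - 1"] nth_append_length_plus[of ys zs "Suc j"] by simp_all
  then show ?thesis
    unfolding extremal_flats_def is_flat_def flat_rel_def
    using assms by (simp add: shift)
qed

context
  fixes ys zs :: "'a list" and p q :: nat
  assumes last_flat: "is_flat ys p (length ys - 1)" and first_flat: "is_flat zs 0 q"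
begin

private lemma bounds: "ys \<noteq> []" "zs \<noteq> []" "p < length ys" "q < length zs"
  using is_flat_bounds[OF last_flat] is_flat_bounds[OF first_flat] by auto

lemma nth_append_junction:
  assumes "p \<le> k" "k \<le> length ys + q"
  shows "(ys @ zs) ! k = (if k < length ys then last ys else hd zs)"
proof (cases "k < length ys")
  case True
  then have "ys ! k = ys ! (length ys - 1)"
    using is_flat_nth[OF last_flat, of k] is_flat_nth[OF last_flat, of "length ys - 1"] assms
    by simp
  with True show ?thesis
    using bounds by (simp add: nth_append last_conv_nth)
next
  case False
  then have "zs ! (k - length ys) = zs ! 0"
    using is_flat_nth[OF first_flat, of "k - length ys"] assms by simp
  with False show ?thesis
    using bounds by (simp add: nth_append hd_conv_nth)
qed

private lemma nth_start_last_flat: "ys ! p = last ys"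
  using is_flat_nth[OF last_flat, of "length ys - 1"] bounds by (simp add: last_conv_nth)

private lemma outer_neighbours:
  "0 < p \<Longrightarrow> (ys @ zs) ! (p - 1) = ys ! (p - 1) \<and> ys ! (p - 1) \<noteq> last ys"
  "Suc q < length zs \<Longrightarrow> (ys @ zs) ! Suc (length ys + q) = zs ! Suc q \<and> zs ! Suc q \<noteq> hd zs"
proof -
  show "0 < p \<Longrightarrow> (ys @ zs) ! (p - 1) = ys ! (p - 1) \<and> ys ! (p - 1) \<noteq> last ys"
    using is_flat_left_neighbour[OF last_flat] nth_start_last_flat bounds
    by (simp add: nth_append less_imp_diff_less)
  show "Suc q < length zs \<Longrightarrow> (ys @ zs) ! Suc (length ys + q) = zs ! Suc q \<and> zs ! Suc q \<noteq> hd zs"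
    using is_flat_right_neighbour[OF first_flat] bounds nth_append_length_plus[of ys zs "Suc q"]
    by (simp add: hd_conv_nth)
qed

lemma is_flat_append_merged:
  assumes "last ys = hd zs"
  shows "is_flat (ys @ zs) p (length ys + q)"
  unfolding is_flat_def
proof (intro conjI allI impI)
  show "p \<le> length ys + q" "length ys + q < length (ys @ zs)"
    using bounds by auto
  show "(ys @ zs) ! k = (ys @ zs) ! p" if "p \<le> k \<and> k \<le> length ys + q" for k
    using that nth_append_junction[of k] nth_append_junction[of p] assms bounds by simp
  show "(ys @ zs) ! (p - 1) \<noteq> (ys @ zs) ! p" if "0 < p"
    using that outer_neighbours(1) nth_append_junction[of p] bounds by simp
  show "(ys @ zs) ! Suc (length ys + q) \<noteq> (ys @ zs) ! p" if "Suc (length ys + q) < length (ys @ zs)"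
    using that outer_neighbours(2) nth_append_junction[of p] assms bounds by simp
qed

lemma is_flat_append_separate:
  assumes "last ys \<noteq> hd zs"
  shows "is_flat (ys @ zs) p (length ys - 1)" and "is_flat (ys @ zs) (length ys) (length ys + q)"
proof -
  show "is_flat (ys @ zs) p (length ys - 1)"
    unfolding is_flat_def
  proof (intro conjI allI impI)
    show "p \<le> length ys - 1" "length ys - 1 < length (ys @ zs)"
      using bounds by auto
    show "(ys @ zs) ! k = (ys @ zs) ! p" if "p \<le> k \<and> k \<le> length ys - 1" for k
      using that nth_append_junction[of k] nth_append_junction[of p] bounds by auto
    show "(ys @ zs) ! (p - 1) \<noteq> (ys @ zs) ! p" if "0 < p"
      using that outer_neighbours(1) nth_append_junction[of p] bounds by simp
    show "(ys @ zs) ! Suc (length ys - 1) \<noteq> (ys @ zs) ! p"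
      using nth_append_junction[of "length ys"] nth_append_junction[of p] assms bounds by simp
  qed
  show "is_flat (ys @ zs) (length ys) (length ys + q)"
    unfolding is_flat_def
  proof (intro conjI allI impI)
    show "length ys \<le> length ys + q" "length ys + q < length (ys @ zs)"
      using bounds by auto
    show "(ys @ zs) ! k = (ys @ zs) ! length ys" if "length ys \<le> k \<and> k \<le> length ys + q" for k
      using that nth_append_junction[of k] nth_append_junction[of "length ys"] bounds by simp
    show "(ys @ zs) ! (length ys - 1) \<noteq> (ys @ zs) ! length ys"
      using nth_append_junction[of "length ys - 1"] nth_append_junction[of "length ys"] assms bounds
      by simp
    show "(ys @ zs) ! Suc (length ys + q) \<noteq> (ys @ zs) ! length ys"
      if "Suc (length ys + q) < length (ys @ zs)"
      using that outer_neighbours(2) nth_append_junction[of "length ys"] bounds by simp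
  qed
qed

lemma card_junction_extremal_flats:
  "card {(i, j) \<in> extremal_flats R (ys @ zs). p \<le> j \<and> i \<le> length ys + q} =
    (if last ys = hd zs then of_bool (flat_rel R ys p (length ys - 1) \<and> flat_rel R zs 0 q)
     else of_bool (flat_rel R ys p (length ys - 1) \<and> R (hd zs) (last ys))
        + of_bool (R (last ys) (hd zs) \<and> flat_rel R zs 0 q))"
proof (cases "last ys = hd zs")
  case True
  have "flat_rel R (ys @ zs) p (length ys + q) \<longleftrightarrow> flat_rel R ys p (length ys - 1) \<and> flat_rel R zs 0 q"
    unfolding flat_rel_def
    using outer_neighbours nth_append_junction[of p] nth_start_last_flat True bounds
    by (auto simp: hd_conv_nth)
  with True show ?thesis
    using extremal_flats_meeting_flat[OF is_flat_append_merged[OF True]] by simp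
next
  case False
  have "flat_rel R (ys @ zs) p (length ys - 1) \<longleftrightarrow> flat_rel R ys p (length ys - 1) \<and> R (hd zs) (last ys)"
    unfolding flat_rel_def
    using outer_neighbours(1) nth_append_junction[of p] nth_append_junction[of "length ys"]
      nth_start_last_flat bounds
    by auto
  moreover have "flat_rel R (ys @ zs) (length ys) (length ys + q) \<longleftrightarrow> R (last ys) (hd zs) \<and> flat_rel R zs 0 q"
    unfolding flat_rel_def
    using outer_neighbours(2) nth_append_junction[of "length ys - 1"] nth_append_junction[of "length ys"]
      bounds
    by (auto simp: hd_conv_nth)
  moreover have "Suc (length ys - 1) = length ys"
    using bounds by simp
  ultimately show ?thesis
    using False card_extremal_flats_meeting_two_flats[of "ys @ zs" p "length ys - 1" "length ys + q" R]
      is_flat_append_separate[OF False] by simp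
qed

lemma card_extremal_flats_append:
  "card (extremal_flats R (ys @ zs)) + of_bool (flat_rel R ys p (length ys - 1)) + of_bool (flat_rel R zs 0 q) =
   card (extremal_flats R ys) + card (extremal_flats R zs)
   + (if last ys = hd zs then of_bool (flat_rel R ys p (length ys - 1) \<and> flat_rel R zs 0 q)
      else of_bool (flat_rel R ys p (length ys - 1) \<and> R (hd zs) (last ys))
        + of_bool (R (last ys) (hd zs) \<and> flat_rel R zs 0 q))"
proof -
  let ?n = "length ys"
  let ?shift = "\<lambda>(i, j). (?n + i, ?n + j)"
  let ?zs_above = "{(i, j) \<in> extremal_flats R zs. q < i}"
  have below: "{(i, j) \<in> extremal_flats R (ys @ zs). j < p} = {(i, j) \<in> extremal_flats R ys. j < p}"
    using extremal_flats_append_left[of _ ys] bounds by auto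
  have above: "{(i, j) \<in> extremal_flats R (ys @ zs). ?n + q < i} = ?shift ` ?zs_above"
  proof (intro equalityI subsetI)
    fix x assume "x \<in> {(i, j) \<in> extremal_flats R (ys @ zs). ?n + q < i}"
    then obtain i j where x: "x = (i, j)" "(i, j) \<in> extremal_flats R (ys @ zs)" "?n + q < i"
      by auto
    then have "i \<le> j"
      using is_flat_bounds unfolding extremal_flats_def by auto
    with x have "(i - ?n, j - ?n) \<in> extremal_flats R zs"
      using extremal_flats_append_right[where ys = ys and zs = zs and i = "i - ?n" and j = "j - ?n"]
      by simp
    moreover have "q < i - ?n" and "x = ?shift (i - ?n, j - ?n)"
      using x \<open>i \<le> j\<close> by auto
    ultimately show "x \<in> ?shift ` ?zs_above" by blast
  qed (auto simp: extremal_flats_append_right)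
  have "inj_on ?shift ?zs_above"
    by (auto simp: inj_on_def)
  with above have X_above: "card {(i, j) \<in> extremal_flats R (ys @ zs). ?n + q < i} = card ?zs_above"
    by (simp add: card_image)
  have ys_above: "{(i, j) \<in> extremal_flats R ys. ?n - 1 < i} = {}"
    using is_flat_bounds[of ys] unfolding extremal_flats_def by fastforce
  have ys_split: "card (extremal_flats R ys) =
      card {(i, j) \<in> extremal_flats R ys. j < p} + of_bool (flat_rel R ys p (?n - 1))"
    using card_extremal_flats_split[of p "?n - 1" R ys,
        unfolded ys_above extremal_flats_meeting_flat[OF last_flat]] bounds
    by simp
  have zs_split: "card (extremal_flats R zs) = card ?zs_above + of_bool (flat_rel R zs 0 q)"
    using card_extremal_flats_split[of 0 q R zs, unfolded extremal_flats_meeting_flat[OF first_flat]]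
    by simp
  show ?thesis
    using card_extremal_flats_split[of p "?n + q" R "ys @ zs"] below X_above ys_split zs_split bounds
      card_junction_extremal_flats[of R]
    by simp
qed

end

theorem mainTheorem8:
  fixes ys zs :: "'a::linorder list"
  assumes "ys \<noteq> []" and "zs \<noteq> []"
    and "(flat_at ys (length ys - 1) (\<lambda>i j. flat_is_min ys i j \<and> \<not> flat_is_max ys i j) \<and>
          flat_at zs 0 (\<lambda>i j. flat_is_max zs i j \<and> \<not> flat_is_min zs i j))
       \<or> (flat_at ys (length ys - 1) (\<lambda>i j. flat_is_max ys i j \<and> \<not> flat_is_min ys i j) \<and>
          flat_at zs 0 (\<lambda>i j. flat_is_min zs i j \<and> \<not> flat_is_max zs i j))"
  shows "num_extrema (ys @ zs) = num_extrema ys + num_extrema zs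
       \<or> (num_min (ys @ zs) + 1 = num_min ys + num_min zs \<and>
          num_max (ys @ zs) + 1 = num_max ys + num_max zs)"
proof -
  obtain p where last_flat: "is_flat ys p (length ys - 1)"
    using assms(3) flat_at_last_index by blast
  obtain q where first_flat: "is_flat zs 0 q"
    using assms(3) flat_at_first_index by blast
  let ?Y = "\<lambda>R. flat_rel R ys p (length ys - 1)" and ?Z = "\<lambda>R. flat_rel R zs 0 q"
  have boundary_types: "?Y (>) \<and> \<not> ?Y (<) \<and> ?Z (<) \<and> \<not> ?Z (>) \<or> ?Y (<) \<and> \<not> ?Y (>) \<and> ?Z (>) \<and> \<not> ?Z (<)"
    using assms(3) is_flat_bounds[OF last_flat]
    by (simp add: flat_at_iff[OF last_flat] flat_at_iff[OF first_flat]
        flat_is_min_eq_flat_rel flat_is_max_eq_flat_rel)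
  note counts = card_extremal_flats_append[OF last_flat first_flat, of "(>)"]
    card_extremal_flats_append[OF last_flat first_flat, of "(<)"]
  \<comment> \<open>c holds iff both boundary flats keep their type in ys @ zs.\<close>
  define c where "c \<longleftrightarrow> (if ?Y (>) then last ys < hd zs else hd zs < last ys)"
  have "num_min (ys @ zs) + 1 = num_min ys + num_min zs + of_bool c \<and>
        num_max (ys @ zs) + 1 = num_max ys + num_max zs + of_bool c"
    using boundary_types counts
    unfolding num_min_eq_card_extremal_flats num_max_eq_card_extremal_flats c_def
    by (cases "last ys" "hd zs" rule: linorder_cases; elim disjE conjE)
      (simp_all add: less_imp_neq order_less_imp_not_eq2)
  then show ?thesis
    unfolding num_extrema_def by (cases c) auto
qed

end
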